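(* Let $\mathcal H$ be a finite-dimensional Hilbert space and $\mathcal T\subset\mathcal S(\mathcal H)$ a set of quantum states. Then $\mathcal T$ does not allow for a proof of contextuality of quantum theory if and only if $\mathcal T$ is commutative (i.e. $\rho\rho'=\rho'\rho$ for all $\rho,\rho'\in\mathcal T$).
   Context: A set of states $\mathcal T$ does not allow for a proof of contextuality of quantum theory if there exist a POVM $\{G_\lambda\}_\lambda$ and states $\{\sigma_\lambda\}_\lambda$ on $\mathcal H$ (finite index set) such that $\mathrm{tr}[\rho M_k]=\sum_\lambda \mathrm{tr}[\rho G_\lambda]\mathrm{tr}[\sigma_\lambda M_k]$ for all $\rho\in\mathcal T$, all POVMs $\{M_k\}_k$ on $\mathcal H$ and all $k$; equivalently, $\rho=\sum_\lambda\mathrm{tr}[\rho G_\lambda]\sigma_\lambda$ for all $\rho\in\mathcal T$, i.e. $\mathcal T$ consists of fixed points of an entanglement breaking (measure-and-prepare) channel. *)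

theory Defs
  imports "HOL-Analysis.Analysis"
begin

text \<open>Operators on the finite-dimensional Hilbert space H = C^'n are
complex matrices indexed by a finite type 'n (dim H = CARD('n)).\<close>

definition cinner_vec :: "complex^'n \<Rightarrow> complex^'n \<Rightarrow> complex" where
  "cinner_vec v w = (\<Sum>i\<in>UNIV. cnj (v $ i) * w $ i)"

definition psd :: "complex^'n^'n \<Rightarrow> bool" where
  "psd A \<longleftrightarrow> (\<forall>v. Im (cinner_vec v (A *v v)) = 0 \<and> Re (cinner_vec v (A *v v)) \<ge> 0)"

definition is_state :: "complex^'n^'n \<Rightarrow> bool" where
  "is_state \<rho> \<longleftrightarrow> psd \<rho> \<and> trace \<rho> = 1"

text \<open>A POVM with finite index set K (indices taken from nat, which is
no loss of generality for finite index sets).\<close>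
definition is_povm :: "nat set \<Rightarrow> (nat \<Rightarrow> complex^'n^'n) \<Rightarrow> bool" where
  "is_povm K M \<longleftrightarrow> finite K \<and> (\<forall>k\<in>K. psd (M k)) \<and> (\<Sum>k\<in>K. M k) = mat 1"

definition no_contextuality_proof :: "(complex^'n^'n) set \<Rightarrow> bool" where
  "no_contextuality_proof T \<longleftrightarrow>
     (\<exists>(\<Lambda>::nat set) G \<sigma>. is_povm \<Lambda> G \<and> (\<forall>l\<in>\<Lambda>. is_state (\<sigma> l)) \<and>
        (\<forall>\<rho>\<in>T. \<forall>(K::nat set) M. is_povm K M \<longrightarrow>
           (\<forall>k\<in>K. trace (\<rho> ** M k) =
                   (\<Sum>l\<in>\<Lambda>. trace (\<rho> ** G l) * trace (\<sigma> l ** M k)))))"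

end

theory Submission
  imports Defs
begin

(* If the states in T commute, they are simultaneously diagonal in an orthonormal basis {e_l};
   measuring in this basis and re-preparing |e_l><e_l| fixes every state of T, so this
   measure-and-prepare channel reproduces all of their statistics.

   Conversely, a state whose statistics are reproduced is a fixed point of the channel, i.e. a
   mixture rho = sum_l p_l sigma_l with weights p_l = tr(rho G_l), and p is a nonnegative
   stationary vector of the stochastic matrix S_lm = tr(sigma_l G_m). Mixtures of two such
   vectors with disjoint supports multiply to zero, because the effects on which one of them
   vanishes annihilate its mixture (a product of positive operators with zero trace is zero).
   Nonnegative stationary vectors are closed under positive parts of differences, so by
   induction on the sizes of the supports any two of them split into proportional and
   disjointly supported pieces, and all their mixtures commute. *)

section \<open>The standard inner product on complex vectors\<close>

lemma cinner_add_left: "cinner_vec (x + y) z = cinner_vec x z + cinner_vec y z"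
  by (simp add: cinner_vec_def sum.distrib distrib_right)

lemma cinner_add_right: "cinner_vec x (y + z) = cinner_vec x y + cinner_vec x z"
  by (simp add: cinner_vec_def sum.distrib distrib_left)

lemma cinner_diff_left: "cinner_vec (x - y) z = cinner_vec x z - cinner_vec y z"
  by (simp add: cinner_vec_def sum_subtractf left_diff_distrib)

lemma cinner_diff_right: "cinner_vec x (y - z) = cinner_vec x y - cinner_vec x z"
  by (simp add: cinner_vec_def sum_subtractf right_diff_distrib)

lemma cinner_scale_left: "cinner_vec (c *s x) z = cnj c * cinner_vec x z"
  by (simp add: cinner_vec_def sum_distrib_left mult.assoc)

lemma cinner_scale_right: "cinner_vec x (c *s z) = c * cinner_vec x z"
  by (simp add: cinner_vec_def sum_distrib_left mult_ac)

lemma cinner_zero_left [simp]: "cinner_vec 0 z = 0"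
  by (simp add: cinner_vec_def)

lemma cinner_zero_right [simp]: "cinner_vec x 0 = 0"
  by (simp add: cinner_vec_def)

lemma cinner_commute_cnj: "cnj (cinner_vec x y) = cinner_vec y x"
  by (simp add: cinner_vec_def mult.commute)

lemma cinner_sum_right: "cinner_vec x (\<Sum>i\<in>I. f i) = (\<Sum>i\<in>I. cinner_vec x (f i))"
  by (induction I rule: infinite_finite_induct) (auto simp: cinner_add_right)

lemma cnj_mult_self: "cnj z * z = complex_of_real ((cmod z)^2)"
  using cmod_power2[of z] by (simp add: complex_eq_iff power2_eq_square)

lemma cinner_self: "cinner_vec x x = complex_of_real ((norm x)^2)"
proof -
  have "cinner_vec x x = (\<Sum>i\<in>UNIV. complex_of_real ((cmod (x$i))^2))"
    unfolding cinner_vec_def by (simp only: cnj_mult_self)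
  also have "\<dots> = complex_of_real ((norm x)^2)"
    by (simp add: norm_vec_def L2_set_def sum_nonneg)
  finally show ?thesis .
qed

lemma cinner_unit_self: "norm e = 1 \<Longrightarrow> cinner_vec e e = 1"
  by (simp add: cinner_self)

lemma Re_cinner_eq_inner: "Re (cinner_vec x y) = inner x y"
  by (simp add: cinner_vec_def inner_vec_def Re_sum inner_complex_def)

lemma scaleR_eq_scale_of_real: "(r::real) *\<^sub>R (x::complex^'n) = complex_of_real r *s x"
  unfolding vec_eq_iff by (simp add: of_real_def)

lemma vec_subspace_imp_subspace: "vec.subspace (W::(complex^'n) set) \<Longrightarrow> subspace W"
  unfolding vec.subspace_def subspace_def by (simp add: scaleR_eq_scale_of_real)

lemma norm_scale: "norm (c *s (x::complex^'n)) = cmod c * norm x"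
proof -
  have "complex_of_real ((norm (c *s x))^2) = cinner_vec (c *s x) (c *s x)"
    by (rule cinner_self[symmetric])
  also have "\<dots> = cnj c * c * cinner_vec x x"
    by (simp add: cinner_scale_left cinner_scale_right)
  also have "\<dots> = complex_of_real ((cmod c * norm x)^2)"
    by (simp only: cnj_mult_self cinner_self of_real_mult[symmetric] power_mult_distrib)
  finally have "(norm (c *s x))^2 = (cmod c * norm x)^2"
    by (simp only: of_real_eq_iff)
  then show ?thesis
    by (simp add: power2_eq_iff_nonneg)
qed

lemma cinner_cauchy_schwarz: "cmod (cinner_vec v x) \<le> norm v * norm (x::complex^'n)"
proof (cases "cinner_vec v x = 0")
  case True
  then show ?thesis by simp
next
  case False
  let ?c = "cinner_vec v x"
  \<comment> \<open>rotate x so that the inner product becomes real and positive\<close>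
  define d where "d = cnj ?c / cmod ?c"
  have "cinner_vec v (d *s x) = complex_of_real ((cmod ?c)^2) / complex_of_real (cmod ?c)"
    by (simp add: cinner_scale_right d_def cnj_mult_self)
  also have "\<dots> = complex_of_real (cmod ?c)"
    using False by (simp add: power2_eq_square)
  finally have "cmod ?c = inner v (d *s x)"
    by (metis Re_cinner_eq_inner Re_complex_of_real)
  also have "\<dots> \<le> norm v * norm (d *s x)"
    by (rule norm_cauchy_schwarz)
  also have "norm (d *s x) = norm x"
    using False by (simp add: norm_scale d_def norm_divide)
  finally show ?thesis .
qed

section \<open>Matrices as operators\<close>

definition adjoint :: "complex^'n^'n \<Rightarrow> complex^'n^'n" where
  "adjoint A = (\<chi> i j. cnj (A $ j $ i))"

definition smult_mat :: "complex \<Rightarrow> complex^'n^'n \<Rightarrow> complex^'n^'n" where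
  "smult_mat c A = (\<chi> i j. c * A $ i $ j)"

definition outer :: "complex^'n \<Rightarrow> complex^'n \<Rightarrow> complex^'n^'n" where
  "outer v w = (\<chi> i j. v $ i * cnj (w $ j))"

lemma cinner_adjoint: "cinner_vec x (A *v y) = cinner_vec (adjoint A *v x) y"
proof -
  have "cinner_vec x (A *v y) = (\<Sum>i\<in>UNIV. \<Sum>j\<in>UNIV. cnj (x$i) * A$i$j * y$j)"
    by (simp add: cinner_vec_def matrix_vector_mult_def sum_distrib_left mult.assoc)
  also have "\<dots> = (\<Sum>j\<in>UNIV. \<Sum>i\<in>UNIV. cnj (x$i) * A$i$j * y$j)"
    by (rule sum.swap)
  also have "\<dots> = cinner_vec (adjoint A *v x) y"
    by (simp add: cinner_vec_def adjoint_def matrix_vector_mult_def sum_distrib_left cnj_sum mult_ac)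
  finally show ?thesis .
qed

lemma matrix_vector_mult_scale: "A *v (c *s x) = c *s (A *v (x::complex^'n))"
  by (simp add: matrix_vector_mult_def vec_eq_iff sum_distrib_left mult_ac)

lemma matrix_mult_add_rdistrib: "((A::complex^'n^'n) + B) ** C = A ** C + B ** C"
  by (simp add: matrix_matrix_mult_def vec_eq_iff distrib_right sum.distrib)

lemma sum_matrix_mult_left: "(\<Sum>i\<in>I. (f i::complex^'n^'n)) ** (B::complex^'n^'n) = (\<Sum>i\<in>I. f i ** B)"
  by (induction I rule: infinite_finite_induct) (auto simp: matrix_mult_add_rdistrib)

lemma sum_matrix_mult_right: "(B::complex^'n^'n) ** (\<Sum>i\<in>I. f i) = (\<Sum>i\<in>I. B ** f i)"
  by (induction I rule: infinite_finite_induct) (auto simp: matrix_add_ldistrib)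

lemma sum_matrix_vector_mult: "(\<Sum>i\<in>I. f i) *v (x::complex^'n) = (\<Sum>i\<in>I. f i *v x)"
  by (induction I rule: infinite_finite_induct) (auto simp: matrix_vector_mult_add_rdistrib)

lemma smult_mat_vector_mult: "smult_mat c A *v x = c *s (A *v x)"
  by (simp add: smult_mat_def matrix_vector_mult_def vec_eq_iff sum_distrib_left mult_ac)

lemma smult_mat_mult_left: "smult_mat c A ** B = smult_mat c (A ** B)"
  by (simp add: smult_mat_def matrix_matrix_mult_def vec_eq_iff sum_distrib_left mult_ac)

lemma smult_mat_mult_right: "A ** smult_mat c B = smult_mat c (A ** B)"
  by (simp add: smult_mat_def matrix_matrix_mult_def vec_eq_iff sum_distrib_left mult_ac)

lemma smult_mat_add_left: "smult_mat (c + d) A = smult_mat c A + smult_mat d A"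
  by (simp add: smult_mat_def vec_eq_iff distrib_right)

lemma smult_mat_smult_mat: "smult_mat c (smult_mat d A) = smult_mat (c * d) A"
  by (simp add: smult_mat_def vec_eq_iff)

lemma smult_mat_sum: "smult_mat c (\<Sum>i\<in>I. f i) = (\<Sum>i\<in>I. smult_mat c (f i))"
  by (induction I rule: infinite_finite_induct) (auto simp: smult_mat_def vec_eq_iff distrib_left)

lemma smult_mat_zero [simp]: "smult_mat 0 A = 0" "smult_mat c 0 = 0"
  by (simp_all add: smult_mat_def vec_eq_iff)

lemma smult_mat_one [simp]: "smult_mat 1 A = A"
  by (simp add: smult_mat_def vec_eq_iff)

lemma trace_smult_mat: "trace (smult_mat c A) = c * trace A"
  by (simp add: smult_mat_def trace_def sum_distrib_left)

lemma trace_sum: "trace (\<Sum>i\<in>I. f i) = (\<Sum>i\<in>I. trace (f i :: complex^'n^'n))"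
  by (induction I rule: infinite_finite_induct) (auto simp: trace_add trace_0[simplified])

lemma outer_zero_left [simp]: "outer 0 w = 0"
  by (simp add: outer_def vec_eq_iff)

lemma outer_vector_mult: "outer v w *v x = cinner_vec w x *s v"
  by (simp add: outer_def matrix_vector_mult_def cinner_vec_def vec_eq_iff sum_distrib_left mult_ac)

lemma matrix_mult_outer: "M ** outer v w = outer (M *v v) w"
  by (simp add: outer_def matrix_matrix_mult_def matrix_vector_mult_def vec_eq_iff
      sum_distrib_right sum_distrib_left mult_ac)

lemma outer_scale: "outer (c *s v) w = smult_mat c (outer v w)"
  by (simp add: outer_def smult_mat_def vec_eq_iff mult_ac)

lemma trace_outer: "trace (outer v w) = cinner_vec w v"
  by (simp add: trace_def outer_def cinner_vec_def mult.commute)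

lemma trace_outer_mult: "trace (outer v w ** M) = cinner_vec w (M *v v)"
  by (simp add: trace_mul_sym[of _ M] matrix_mult_outer trace_outer)

lemma trace_mult_outer: "trace (M ** outer v w) = cinner_vec w (M *v v)"
  by (simp add: matrix_mult_outer trace_outer)

section \<open>Quadratic forms and positive semidefinite matrices\<close>

lemma cinner_axis_matrix: "cinner_vec (axis i 1) (A *v axis j 1) = A $ i $ j"
  by (simp add: cinner_vec_def matrix_vector_mult_def axis_def if_distrib if_distribR cong: if_cong)

lemma quadratic_form_add_scale:
  "cinner_vec (x + c *s y) (A *v (x + c *s y)) =
     cinner_vec x (A *v x) + cnj c * c * cinner_vec y (A *v y)
     + c * cinner_vec x (A *v y) + cnj c * cinner_vec y (A *v x)"
  by (simp add: matrix_vector_right_distrib matrix_vector_mult_scale cinner_add_left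
      cinner_add_right cinner_scale_left cinner_scale_right algebra_simps)

lemma quadratic_form_scale:
  "cinner_vec (c *s v) (A *v (c *s v)) = complex_of_real ((cmod c)^2) * cinner_vec v (A *v v)"
proof -
  have "cinner_vec (c *s v) (A *v (c *s v)) = (cnj c * c) * cinner_vec v (A *v v)"
    by (simp add: matrix_vector_mult_scale cinner_scale_left cinner_scale_right)
  then show ?thesis
    by (simp only: cnj_mult_self)
qed

lemma quadratic_form_polarization:
  fixes A :: "complex^'n^'n"
  shows "cinner_vec (axis i 1 + axis j 1) (A *v (axis i 1 + axis j 1))
           = A$i$i + A$j$j + A$i$j + A$j$i"
    and "cinner_vec (axis i 1 + \<i> *s axis j 1) (A *v (axis i 1 + \<i> *s axis j 1))
           = A$i$i + A$j$j + \<i> * A$i$j - \<i> * A$j$i"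
  using quadratic_form_add_scale[of "axis i 1" 1 "axis j 1" A]
    quadratic_form_add_scale[of "axis i 1" \<i> "axis j 1" A]
  by (simp_all add: cinner_axis_matrix)

lemma quadratic_form_eq_0_imp_eq_0:
  assumes "\<And>v. cinner_vec v ((A::complex^'n^'n) *v v) = 0"
  shows "A = 0"
proof -
  have "A $ i $ j = 0" for i j
  proof -
    have "A$i$i = 0" "A$j$j = 0"
      using assms[of "axis i 1"] assms[of "axis j 1"] by (simp_all add: cinner_axis_matrix)
    moreover have "A$i$i + A$j$j + A$i$j + A$j$i = 0"
      using assms[of "axis i 1 + axis j 1"] unfolding quadratic_form_polarization(1) .
    moreover have "A$i$i + A$j$j + \<i> * A$i$j - \<i> * A$j$i = 0"
      using assms[of "axis i 1 + \<i> *s axis j 1"] unfolding quadratic_form_polarization(2) .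
    ultimately show ?thesis
      by (simp add: complex_eq_iff)
  qed
  then show ?thesis
    by (simp add: vec_eq_iff)
qed

lemma quadratic_form_eq_0_on_unit_ball_imp_eq_0:
  assumes "\<And>v. norm v \<le> 1 \<Longrightarrow> cinner_vec v ((A::complex^'n^'n) *v v) = 0"
  shows "A = 0"
proof (rule quadratic_form_eq_0_imp_eq_0)
  fix v :: "complex^'n"
  show "cinner_vec v (A *v v) = 0"
  proof (cases "v = 0")
    case False
    define u where "u = complex_of_real (1 / norm v) *s v"
    have "v = complex_of_real (norm v) *s u"
      using False by (simp add: u_def vector_smult_assoc)
    moreover have "norm u = 1"
      using False by (simp add: u_def norm_scale norm_divide)
    ultimately show ?thesis
      using assms[of u] quadratic_form_scale[of "complex_of_real (norm v)" u A] by simp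
  qed simp
qed

lemma psdD:
  "psd A \<Longrightarrow> cinner_vec v (A *v v) = complex_of_real (Re (cinner_vec v (A *v v)))"
  "psd A \<Longrightarrow> Re (cinner_vec v (A *v v)) \<ge> 0"
  by (simp_all add: psd_def complex_eq_iff)

lemma psd_adjoint_eq:
  assumes "psd (A::complex^'n^'n)"
  shows "adjoint A = A"
proof -
  have Im0: "Im (cinner_vec v (A *v v)) = 0" for v
    using assms by (simp add: psd_def)
  have "cnj (A $ j $ i) = A $ i $ j" for i j
  proof -
    have "Im (A$i$i) = 0" "Im (A$j$j) = 0"
      using Im0[of "axis i 1"] Im0[of "axis j 1"] by (simp_all add: cinner_axis_matrix)
    moreover have "Im (A$i$i + A$j$j + A$i$j + A$j$i) = 0"
      using Im0[of "axis i 1 + axis j 1"] unfolding quadratic_form_polarization(1) .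
    moreover have "Im (A$i$i + A$j$j + \<i> * A$i$j - \<i> * A$j$i) = 0"
      using Im0[of "axis i 1 + \<i> *s axis j 1"] unfolding quadratic_form_polarization(2) .
    ultimately show ?thesis
      by (simp add: complex_eq_iff)
  qed
  then show ?thesis
    by (simp add: adjoint_def vec_eq_iff)
qed

lemma psd_zero [simp]: "psd 0"
  by (simp add: psd_def)

lemma psd_add: "psd A \<Longrightarrow> psd B \<Longrightarrow> psd (A + B)"
  by (simp add: psd_def matrix_vector_mult_add_rdistrib cinner_add_right)

lemma psd_smult_mat: "r \<ge> 0 \<Longrightarrow> psd A \<Longrightarrow> psd (smult_mat (complex_of_real r) A)"
  by (simp add: psd_def smult_mat_vector_mult cinner_scale_right)

lemma psd_sum: "(\<And>i. i \<in> I \<Longrightarrow> psd (f i)) \<Longrightarrow> psd (\<Sum>i\<in>I. f i)"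
  by (induction I rule: infinite_finite_induct) (auto intro: psd_add)

lemma quadratic_form_outer:
  "cinner_vec x (outer v v *v x) = complex_of_real ((cmod (cinner_vec v x))^2)"
proof -
  have "cinner_vec x (outer v v *v x) = cnj (cinner_vec v x) * cinner_vec v x"
    by (simp add: outer_vector_mult cinner_scale_right cinner_commute_cnj mult.commute)
  then show ?thesis
    by (simp only: cnj_mult_self)
qed

lemma psd_outer: "psd (outer v v)"
  by (simp add: psd_def quadratic_form_outer)

lemma psd_id_minus_outer:
  assumes "norm v \<le> 1"
  shows "psd (mat 1 - outer v v)"
proof -
  have "cinner_vec x ((mat 1 - outer v v) *v x)
      = complex_of_real ((norm x)^2 - (cmod (cinner_vec v x))^2)" for x
    by (simp only: matrix_vector_mult_diff_rdistrib cinner_diff_right quadratic_form_outer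
        cinner_self matrix_vector_mul_lid of_real_diff)
  moreover have "(cmod (cinner_vec v x))^2 \<le> (norm x)^2" for x
  proof -
    have "cmod (cinner_vec v x) \<le> norm v * norm x"
      by (rule cinner_cauchy_schwarz)
    also have "\<dots> \<le> norm x"
      using assms by (simp add: mult_left_le_one_le)
    finally show ?thesis
      by (simp add: power_mono)
  qed
  ultimately show ?thesis
    by (simp add: psd_def)
qed

lemma is_state_outer: "norm v = 1 \<Longrightarrow> is_state (outer v v)"
  by (simp add: is_state_def psd_outer trace_outer cinner_self)

section \<open>Simultaneous diagonalisation of commuting Hermitian matrices\<close>

definition hermitian :: "complex^'n^'n \<Rightarrow> bool" where
  "hermitian A \<longleftrightarrow> (\<forall>x y. cinner_vec x (A *v y) = cinner_vec (A *v x) y)"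

lemma psd_hermitian: "psd A \<Longrightarrow> hermitian A"
  unfolding hermitian_def by (metis cinner_adjoint psd_adjoint_eq)

lemma hermitian_nonneg_form_eq_0_imp_kernel:
  assumes herm: "hermitian B" and W: "vec.subspace W" and inv: "\<forall>x\<in>W. B *v x \<in> W"
    and nonneg: "\<forall>u\<in>W. 0 \<le> Re (cinner_vec u (B *v u))"
    and v: "v \<in> W" and zero: "Re (cinner_vec v (B *v v)) = 0"
  shows "B *v v = 0"
proof -
  define w where "w = B *v v"
  define \<beta> where "\<beta> = Re (cinner_vec w (B *v w))"
  define N where "N = Re (cinner_vec w w)"
  have "w \<in> W"
    using inv v by (simp add: w_def)
  then have "\<beta> \<ge> 0"
    using nonneg by (simp add: \<beta>_def)
  \<comment> \<open>the form at v + t w is a real quadratic in t with no constant term and linear coefficient 2N\<close>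
  have quadratic: "0 \<le> t^2 * \<beta> + 2 * t * N" for t :: real
  proof -
    have "v + complex_of_real t *s w \<in> W"
      using W v \<open>w \<in> W\<close> unfolding vec.subspace_def by blast
    then have "0 \<le> Re (cinner_vec (v + complex_of_real t *s w) (B *v (v + complex_of_real t *s w)))"
      using nonneg by blast
    moreover have "cinner_vec v (B *v w) = cinner_vec w w"
      using herm unfolding hermitian_def w_def by metis
    ultimately show ?thesis
      unfolding quadratic_form_add_scale using zero
      by (simp add: w_def \<beta>_def N_def power2_eq_square)
  qed
  have "N = 0"
  proof (rule ccontr)
    assume "N \<noteq> 0"
    then have "N > 0"
      by (simp add: N_def cinner_self)
    define d where "d = \<beta> + 1"
    have "d > 0"
      using \<open>\<beta> \<ge> 0\<close> by (simp add: d_def)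
    define t where "t = - N / d"
    have "t^2 * \<beta> + 2 * t * N = (N / d) * N * (\<beta> / d - 2)"
      using \<open>d > 0\<close> unfolding t_def by (simp add: field_simps power2_eq_square)
    also have "\<dots> < 0"
      using \<open>N > 0\<close> \<open>d > 0\<close> by (intro mult_pos_neg) (simp_all add: d_def divide_less_eq)
    finally show False
      using quadratic[of t] by simp
  qed
  then show ?thesis
    by (simp add: N_def cinner_self w_def)
qed

lemma quadratic_form_attains_max_on_subspace:
  fixes A :: "complex^'n^'n"
  assumes W: "vec.subspace W" and nontrivial: "\<exists>x\<in>W. x \<noteq> 0"
  shows "\<exists>v\<in>W. norm v = 1 \<and>
    (\<forall>u\<in>W. Re (cinner_vec u (A *v u)) \<le> Re (cinner_vec v (A *v v)) * (norm u)^2)"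
proof -
  define f where "f v = Re (cinner_vec v (A *v v))" for v
  define normalize where "normalize x = complex_of_real (1 / norm x) *s x" for x :: "complex^'n"
  have normalize: "normalize x \<in> W \<inter> sphere 0 1" if "x \<in> W" "x \<noteq> 0" for x
    using that W unfolding vec.subspace_def normalize_def by (simp add: norm_scale norm_divide)
  have "compact (W \<inter> sphere 0 1)"
    using W by (simp add: closed_Int_compact closed_subspace vec_subspace_imp_subspace)
  moreover have "W \<inter> sphere 0 1 \<noteq> {}"
    using nontrivial normalize by blast
  moreover have "continuous_on (W \<inter> sphere 0 1) f"
    unfolding f_def cinner_vec_def matrix_vector_mult_def by (intro continuous_intros)
  ultimately obtain v where v: "v \<in> W \<inter> sphere 0 1" and max: "\<forall>y\<in>W \<inter> sphere 0 1. f y \<le> f v"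
    using continuous_attains_sup by blast
  have "f u \<le> f v * (norm u)^2" if "u \<in> W" for u
  proof (cases "u = 0")
    case False
    have "f u = (norm u)^2 * f (normalize u)"
      using False unfolding f_def normalize_def quadratic_form_scale
      by (simp add: power_divide norm_divide)
    also have "\<dots> \<le> (norm u)^2 * f v"
      using max normalize[OF that False] by (simp add: mult_left_mono)
    finally show ?thesis
      by (simp add: mult.commute)
  qed (simp add: f_def)
  then show ?thesis
    using v unfolding f_def by auto
qed

lemma hermitian_invariant_subspace_eigenvector:
  fixes A :: "complex^'n^'n"
  assumes herm: "hermitian A" and W: "vec.subspace W" and inv: "\<forall>x\<in>W. A *v x \<in> W"
    and nontrivial: "\<exists>x\<in>W. x \<noteq> 0"
  shows "\<exists>v\<in>W. v \<noteq> 0 \<and> (\<exists>\<mu>. A *v v = \<mu> *s v)"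
proof -
  obtain v where "v \<in> W" and "norm v = 1"
    and max: "\<forall>u\<in>W. Re (cinner_vec u (A *v u)) \<le> Re (cinner_vec v (A *v v)) * (norm u)^2"
    using quadratic_form_attains_max_on_subspace[OF W nontrivial] by blast
  define \<mu> where "\<mu> = complex_of_real (Re (cinner_vec v (A *v v)))"
  \<comment> \<open>at the maximiser v of the Rayleigh quotient, \<mu> - A is nonnegative on W and vanishes at v\<close>
  define B where "B = smult_mat \<mu> (mat 1) - A"
  have B: "B *v x = \<mu> *s x - A *v x" for x
    by (simp add: B_def matrix_vector_mult_diff_rdistrib smult_mat_vector_mult)
  have form_B: "Re (cinner_vec u (B *v u)) = Re \<mu> * (norm u)^2 - Re (cinner_vec u (A *v u))" for u
    unfolding B cinner_diff_right cinner_scale_right cinner_self by (simp add: \<mu>_def)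
  have "B *v v = 0"
  proof (rule hermitian_nonneg_form_eq_0_imp_kernel[OF _ W _ _ \<open>v \<in> W\<close>])
    show "hermitian B"
      using herm unfolding hermitian_def B
      by (simp add: cinner_diff_left cinner_diff_right cinner_scale_left cinner_scale_right \<mu>_def)
    show "\<forall>x\<in>W. B *v x \<in> W"
      using W inv unfolding B by (auto intro: vec.subspace_diff vec.subspace_scale)
    show "\<forall>u\<in>W. 0 \<le> Re (cinner_vec u (B *v u))"
      using max unfolding form_B by (simp add: \<mu>_def)
    show "Re (cinner_vec v (B *v v)) = 0"
      unfolding form_B \<open>norm v = 1\<close> by (simp add: \<mu>_def)
  qed
  then have "A *v v = \<mu> *s v"
    by (simp add: B)
  moreover have "v \<noteq> 0"
    using \<open>norm v = 1\<close> by auto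
  ultimately show ?thesis
    using \<open>v \<in> W\<close> by blast
qed

lemma subspace_eigenspace_Int:
  "vec.subspace W \<Longrightarrow> vec.subspace {x\<in>W. A *v x = \<mu> *s (x::complex^'n)}"
  unfolding vec.subspace_def
  by (simp add: matrix_vector_right_distrib vector_add_ldistrib matrix_vector_mult_scale
      vector_smult_assoc mult.commute)

lemma commuting_matrix_preserves_eigenvector:
  assumes "A ** B = B ** A" "A *v x = \<mu> *s (x::complex^'n)"
  shows "A *v (B *v x) = \<mu> *s (B *v x)"
  by (metis assms matrix_vector_mul_assoc matrix_vector_mult_scale)

lemma commuting_hermitian_common_eigenvector:
  fixes F :: "(complex^'n^'n) set"
  assumes herm: "\<forall>A\<in>F. hermitian A" and comm: "\<forall>A\<in>F. \<forall>B\<in>F. A ** B = B ** A"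
    and W: "vec.subspace W" and inv: "\<forall>A\<in>F. \<forall>x\<in>W. A *v x \<in> W"
    and nontrivial: "\<exists>x\<in>W. x \<noteq> 0"
  shows "\<exists>v\<in>W. v \<noteq> 0 \<and> (\<forall>A\<in>F. \<exists>\<mu>. A *v v = \<mu> *s v)"
proof -
  define P where "P W' \<longleftrightarrow> vec.subspace W' \<and> W' \<subseteq> W \<and> (\<forall>A\<in>F. \<forall>x\<in>W'. A *v x \<in> W')
    \<and> (\<exists>x\<in>W'. x \<noteq> 0)" for W' :: "(complex^'n) set"
  have "P W"
    using W inv nontrivial by (simp add: P_def)
  \<comment> \<open>an invariant subspace of least dimension consists of common eigenvectors\<close>
  then obtain W0 where "P W0" and least: "\<And>W'. P W' \<Longrightarrow> vec.dim W0 \<le> vec.dim W'"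
    using ex_has_least_nat[of P W vec.dim] by blast
  then have W0: "vec.subspace W0" "W0 \<subseteq> W" "\<forall>A\<in>F. \<forall>x\<in>W0. A *v x \<in> W0" "\<exists>x\<in>W0. x \<noteq> 0"
    by (auto simp: P_def)
  have scalar: "\<exists>\<mu>. \<forall>x\<in>W0. A *v x = \<mu> *s x" if A: "A \<in> F" for A
  proof -
    obtain v \<mu> where "v \<in> W0" "v \<noteq> 0" "A *v v = \<mu> *s v"
      using hermitian_invariant_subspace_eigenvector[of A W0] herm A W0 by blast
    define E where "E = {x\<in>W0. A *v x = \<mu> *s x}"
    have "vec.subspace E"
      unfolding E_def using W0(1) by (rule subspace_eigenspace_Int)
    moreover have "P E"
      using \<open>vec.subspace E\<close> W0 comm A commuting_matrix_preserves_eigenvector[of A]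
        \<open>v \<in> W0\<close> \<open>v \<noteq> 0\<close> \<open>A *v v = \<mu> *s v\<close>
      unfolding P_def E_def by blast
    then have "vec.dim W0 \<le> vec.dim E"
      by (rule least)
    ultimately have "E = W0"
      using vec.subspace_dim_equal[OF _ W0(1)] by (auto simp: E_def)
    then show ?thesis
      by (auto simp: E_def)
  qed
  obtain v where "v \<in> W0" "v \<noteq> 0"
    using W0(4) by blast
  then show ?thesis
    using scalar W0(2) by blast
qed

definition orthonormal :: "(complex^'n) set \<Rightarrow> bool" where
  "orthonormal B \<longleftrightarrow> (\<forall>e\<in>B. norm e = 1) \<and> (\<forall>e\<in>B. \<forall>e'\<in>B. e \<noteq> e' \<longrightarrow> cinner_vec e e' = 0)"

lemma orthonormal_subset: "orthonormal B \<Longrightarrow> C \<subseteq> B \<Longrightarrow> orthonormal C"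
  unfolding orthonormal_def by blast

lemma orthonormal_insert:
  assumes "orthonormal B" "norm u = 1" "\<forall>e\<in>B. cinner_vec e u = 0"
  shows "orthonormal (insert u B)"
proof -
  have "cinner_vec u e = 0" if "e \<in> B" for e
    using assms(3) that cinner_commute_cnj[of e u] by simp
  then show ?thesis
    using assms unfolding orthonormal_def by auto
qed

lemma orthonormal_cinner_sum:
  assumes "orthonormal B" "finite B" "e \<in> B"
  shows "cinner_vec e (\<Sum>v\<in>B. u v *s v) = u e"
proof -
  have "cinner_vec e (\<Sum>v\<in>B. u v *s v) = (\<Sum>v\<in>B. u v * cinner_vec e v)"
    by (simp add: cinner_sum_right cinner_scale_right)
  also have "\<dots> = u e * cinner_vec e e + (\<Sum>v\<in>B - {e}. u v * cinner_vec e v)"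
    using assms by (simp add: sum.remove)
  also have "(\<Sum>v\<in>B - {e}. u v * cinner_vec e v) = 0"
    using assms unfolding orthonormal_def by (intro sum.neutral) auto
  finally show ?thesis
    using assms by (simp add: orthonormal_def cinner_unit_self)
qed

lemma orthonormal_finite_card_le:
  fixes B :: "(complex^'n) set"
  assumes "orthonormal B"
  shows "finite B" "card B \<le> vec.dim (UNIV :: (complex^'n) set)"
proof -
  have independent: "vec.independent B"
    unfolding vec.independent_explicit_module
  proof (intro allI impI)
    fix t u v
    assume t: "finite t" "t \<subseteq> B" "(\<Sum>v\<in>t. u v *s v) = 0" "v \<in> t"
    then have "cinner_vec v (\<Sum>v\<in>t. u v *s v) = u v"
      using orthonormal_subset[OF assms] by (intro orthonormal_cinner_sum) auto
    then show "u v = 0"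
      using t by simp
  qed
  show "finite B"
    using independent by (rule vec.finiteI_independent)
  show "card B \<le> vec.dim (UNIV :: (complex^'n) set)"
    using vec.independent_card_le_dim[OF subset_UNIV independent] .
qed

lemma orthonormal_resolution_of_identity:
  assumes "orthonormal B" "finite B" and complete: "\<And>x. \<forall>e\<in>B. cinner_vec e x = 0 \<Longrightarrow> x = 0"
  shows "(\<Sum>e\<in>B. outer e e) = mat 1"
proof -
  have "(\<Sum>e\<in>B. outer e e) *v x = x" for x
  proof -
    define y where "y = x - (\<Sum>e\<in>B. cinner_vec e x *s e)"
    have "cinner_vec e y = 0" if "e \<in> B" for e
      using orthonormal_cinner_sum[OF assms(1,2) that, of "\<lambda>e. cinner_vec e x"]
      by (simp add: y_def cinner_diff_right)
    then have "y = 0"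
      by (rule complete[rule_format])
    then show ?thesis
      by (simp add: y_def sum_matrix_vector_mult outer_vector_mult)
  qed
  then show ?thesis
    by (simp add: matrix_eq)
qed

lemma eigenvector_scale: "A *v v = \<mu> *s v \<Longrightarrow> A *v (c *s v) = \<mu> *s (c *s (v::complex^'n))"
  by (simp add: matrix_vector_mult_scale vector_smult_assoc mult.commute)

lemma hermitian_preserves_orthogonality_to_eigenvector:
  assumes "hermitian A" "A *v e = \<mu> *s e" "cinner_vec e x = 0"
  shows "cinner_vec e (A *v x) = 0"
  using assms unfolding hermitian_def by (simp add: cinner_scale_left)

lemma commuting_hermitian_eigenbasis:
  fixes F :: "(complex^'n^'n) set"
  assumes herm: "\<forall>A\<in>F. hermitian A" and comm: "\<forall>A\<in>F. \<forall>B\<in>F. A ** B = B ** A"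
  shows "\<exists>B. finite B \<and> orthonormal B \<and> (\<forall>A\<in>F. \<forall>e\<in>B. \<exists>\<mu>. A *v e = \<mu> *s e)
    \<and> (\<Sum>e\<in>B. outer e e) = mat 1"
proof -
  define N where "N = vec.dim (UNIV :: (complex^'n) set)"
  define Q where "Q B \<longleftrightarrow> orthonormal B \<and> (\<forall>A\<in>F. \<forall>e\<in>B. \<exists>\<mu>. A *v e = \<mu> *s e)" for B
  have "Q {}"
    by (simp add: Q_def orthonormal_def)
  then obtain B where "Q B" and maximal: "\<And>B'. Q B' \<Longrightarrow> N - card B \<le> N - card B'"
    using ex_has_least_nat[of Q "{}" "\<lambda>B. N - card B"] by blast
  then have B: "orthonormal B" "\<forall>A\<in>F. \<forall>e\<in>B. \<exists>\<mu>. A *v e = \<mu> *s e"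
    by (auto simp: Q_def)
  have "finite B"
    using orthonormal_finite_card_le(1)[OF B(1)] .
  define W where "W = {x. \<forall>e\<in>B. cinner_vec e x = 0}"
  have W: "vec.subspace W"
    unfolding vec.subspace_def W_def by (simp add: cinner_add_right cinner_scale_right)
  have inv: "\<forall>A\<in>F. \<forall>x\<in>W. A *v x \<in> W"
    using herm B(2) hermitian_preserves_orthogonality_to_eigenvector unfolding W_def by blast
  have "x = 0" if "x \<in> W" for x
  proof (rule ccontr)
    assume "x \<noteq> 0"
    then obtain v where "v \<in> W" "v \<noteq> 0" and eig: "\<forall>A\<in>F. \<exists>\<mu>. A *v v = \<mu> *s v"
      using commuting_hermitian_common_eigenvector[OF herm comm W inv] \<open>x \<in> W\<close> by blast
    define u where "u = complex_of_real (1 / norm v) *s v"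
    have "norm u = 1"
      using \<open>v \<noteq> 0\<close> by (simp add: u_def norm_scale norm_divide)
    have "u \<in> W"
      using W \<open>v \<in> W\<close> unfolding u_def by (simp add: vec.subspace_scale)
    have "orthonormal (insert u B)"
      using B(1) \<open>norm u = 1\<close> \<open>u \<in> W\<close> unfolding W_def by (intro orthonormal_insert) auto
    moreover have "\<forall>A\<in>F. \<forall>e\<in>insert u B. \<exists>\<mu>. A *v e = \<mu> *s e"
      using B(2) eig eigenvector_scale[of _ v] unfolding u_def by (metis insert_iff)
    ultimately have "Q (insert u B)"
      by (simp add: Q_def)
    moreover have "u \<notin> B"
      using \<open>u \<in> W\<close> \<open>norm u = 1\<close> by (auto simp: W_def cinner_unit_self)
    ultimately have "N - card B \<le> N - (card B + 1)" "card B + 1 \<le> N"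
      using maximal[of "insert u B"] orthonormal_finite_card_le(2)[of "insert u B"] \<open>finite B\<close>
      by (simp_all add: Q_def N_def)
    then show False
      by simp
  qed
  then have "(\<Sum>e\<in>B. outer e e) = mat 1"
    using orthonormal_resolution_of_identity[OF B(1) \<open>finite B\<close>] by (simp add: W_def)
  then show ?thesis
    using \<open>finite B\<close> B by blast
qed

lemma eigenbasis_decomposition:
  assumes "finite B" "orthonormal B" "\<forall>e\<in>B. \<exists>\<mu>. A *v e = \<mu> *s e" "(\<Sum>e\<in>B. outer e e) = mat 1"
  shows "A = (\<Sum>e\<in>B. smult_mat (cinner_vec e (A *v e)) (outer e e))"
proof -
  have eigenvalue: "A *v e = cinner_vec e (A *v e) *s e" if e: "e \<in> B" for e
  proof -
    obtain \<mu> where "A *v e = \<mu> *s e"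
      using assms(3) e by blast
    moreover have "norm e = 1"
      using assms(2) e by (simp add: orthonormal_def)
    ultimately show ?thesis
      by (simp add: cinner_scale_right cinner_unit_self)
  qed
  have "A = A ** (\<Sum>e\<in>B. outer e e)"
    using assms(4) by simp
  also have "\<dots> = (\<Sum>e\<in>B. outer (A *v e) e)"
    by (simp add: sum_matrix_mult_right matrix_mult_outer)
  also have "\<dots> = (\<Sum>e\<in>B. smult_mat (cinner_vec e (A *v e)) (outer e e))"
  proof (rule sum.cong[OF refl])
    fix e
    assume "e \<in> B"
    then show "outer (A *v e) e = smult_mat (cinner_vec e (A *v e)) (outer e e)"
      using eigenvalue outer_scale by metis
  qed
  finally show ?thesis .
qed

lemma psd_spectral_decomposition:
  assumes "psd X"
  obtains B a where "finite B" "\<forall>e\<in>B. a e \<ge> 0"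
    "X = (\<Sum>e\<in>B. smult_mat (complex_of_real (a e)) (outer e e))"
proof -
  obtain B where B: "finite B" "orthonormal B" "\<forall>e\<in>B. \<exists>\<mu>. X *v e = \<mu> *s e"
    "(\<Sum>e\<in>B. outer e e) = mat 1"
    using commuting_hermitian_eigenbasis[of "{X}"] psd_hermitian[OF assms] by auto
  show ?thesis
  proof
    show "finite B"
      by (rule B(1))
    show "\<forall>e\<in>B. Re (cinner_vec e (X *v e)) \<ge> 0"
      using assms by (simp add: psdD(2))
    have "X = (\<Sum>e\<in>B. smult_mat (cinner_vec e (X *v e)) (outer e e))"
      by (rule eigenbasis_decomposition[OF B])
    then show "X = (\<Sum>e\<in>B. smult_mat (complex_of_real (Re (cinner_vec e (X *v e)))) (outer e e))"
      by (simp only: psdD(1)[OF assms, symmetric])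
  qed
qed

lemma trace_decomposition_mult:
  "trace ((\<Sum>e\<in>B. smult_mat (c e) (outer e e)) ** Y) = (\<Sum>e\<in>B. c e * cinner_vec e (Y *v e))"
  by (simp add: sum_matrix_mult_left smult_mat_mult_left trace_sum trace_smult_mat trace_outer_mult)

lemma trace_psd_mult:
  assumes "psd X" "psd Y"
  shows trace_psd_mult_real: "trace (X ** Y) = complex_of_real (Re (trace (X ** Y)))"
    and trace_psd_mult_nonneg: "Re (trace (X ** Y)) \<ge> 0"
proof -
  obtain B a where a: "\<forall>e\<in>B. a e \<ge> 0"
    and X: "X = (\<Sum>e\<in>B. smult_mat (complex_of_real (a e)) (outer e e))"
    using psd_spectral_decomposition[OF assms(1)] by blast
  define b where "b e = Re (cinner_vec e (Y *v e))" for e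
  have "trace (X ** Y) = complex_of_real (\<Sum>e\<in>B. a e * b e)"
    unfolding X trace_decomposition_mult b_def by (simp add: psdD(1)[OF assms(2), symmetric])
  moreover have "(\<Sum>e\<in>B. a e * b e) \<ge> 0"
    using a psdD(2)[OF assms(2)] by (simp add: b_def sum_nonneg)
  ultimately show "trace (X ** Y) = complex_of_real (Re (trace (X ** Y)))" "Re (trace (X ** Y)) \<ge> 0"
    by simp_all
qed

lemma psd_form_eq_0_imp_kernel: "psd E \<Longrightarrow> Re (cinner_vec v (E *v v)) = 0 \<Longrightarrow> E *v v = 0"
  by (rule hermitian_nonneg_form_eq_0_imp_kernel[of E UNIV])
    (auto simp: psd_hermitian vec.subspace_UNIV psdD(2))

lemma trace_psd_mult_eq_0_imp:
  assumes "psd X" "psd Y" "trace (X ** Y) = 0"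
  shows "Y ** X = 0"
proof -
  obtain B a where B: "finite B" "\<forall>e\<in>B. a e \<ge> 0"
    and X: "X = (\<Sum>e\<in>B. smult_mat (complex_of_real (a e)) (outer e e))"
    using psd_spectral_decomposition[OF assms(1)] by blast
  define b where "b e = Re (cinner_vec e (Y *v e))" for e
  have "complex_of_real (\<Sum>e\<in>B. a e * b e) = trace (X ** Y)"
    unfolding X trace_decomposition_mult b_def by (simp add: psdD(1)[OF assms(2), symmetric])
  then have "(\<Sum>e\<in>B. a e * b e) = 0"
    using assms(3) by (simp flip: of_real_mult of_real_sum)
  moreover have "\<forall>e\<in>B. a e * b e \<ge> 0"
    using B(2) psdD(2)[OF assms(2)] by (simp add: b_def)
  ultimately have disjoint: "a e = 0 \<or> b e = 0" if "e \<in> B" for e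
    using B(1) that by (simp add: sum_nonneg_eq_0_iff)
  have "smult_mat (complex_of_real (a e)) (outer (Y *v e) e) = 0" if e: "e \<in> B" for e
  proof (cases "a e = 0")
    case False
    \<comment> \<open>Y kills every eigenvector of X with nonzero eigenvalue\<close>
    then have "Y *v e = 0"
      using disjoint[OF e] psd_form_eq_0_imp_kernel[OF assms(2)] by (simp add: b_def)
    then show ?thesis
      by simp
  qed simp
  then show ?thesis
    unfolding X by (simp add: sum_matrix_mult_right smult_mat_mult_right matrix_mult_outer)
qed

section \<open>Stationary vectors of stochastic matrices\<close>

definition stochastic :: "'i set \<Rightarrow> ('i \<Rightarrow> 'i \<Rightarrow> real) \<Rightarrow> bool" where
  "stochastic L S \<longleftrightarrow> (\<forall>l\<in>L. \<forall>m\<in>L. S l m \<ge> 0) \<and> (\<forall>l\<in>L. (\<Sum>m\<in>L. S l m) = 1)"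

definition stationary :: "'i set \<Rightarrow> ('i \<Rightarrow> 'i \<Rightarrow> real) \<Rightarrow> ('i \<Rightarrow> real) \<Rightarrow> bool" where
  "stationary L S a \<longleftrightarrow> (\<forall>m\<in>L. (\<Sum>l\<in>L. a l * S l m) = a m)"

lemma stationary_cong: "(\<And>l. l \<in> L \<Longrightarrow> a l = b l) \<Longrightarrow> stationary L S a \<Longrightarrow> stationary L S b"
  unfolding stationary_def by (metis (no_types, lifting) sum.cong)

lemma stationary_lin_comb:
  "stationary L S a \<Longrightarrow> stationary L S b \<Longrightarrow> stationary L S (\<lambda>l. a l + c * b l)"
  unfolding stationary_def
  by (simp add: distrib_right sum.distrib mult.assoc sum_distrib_left[symmetric])

lemma stationary_pos_part:
  assumes "finite L" "stochastic L S" "stationary L S \<mu>"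
  shows "stationary L S (\<lambda>l. max 0 (\<mu> l))"
proof -
  define p where "p l = max 0 (\<mu> l)" for l
  define q where "q m = (\<Sum>l\<in>L. p l * S l m)" for m
  have S: "\<forall>l\<in>L. \<forall>m\<in>L. S l m \<ge> 0" "\<forall>l\<in>L. (\<Sum>m\<in>L. S l m) = 1"
    using assms(2) by (simp_all add: stochastic_def)
  \<comment> \<open>pS dominates both \<mu>S = \<mu> and 0, hence p, and has the same total mass as p\<close>
  have "q m - p m \<ge> 0" if "m \<in> L" for m
  proof -
    have "q m \<ge> (\<Sum>l\<in>L. \<mu> l * S l m)"
      unfolding q_def using S that by (intro sum_mono mult_right_mono) (auto simp: p_def)
    then have "q m \<ge> \<mu> m"
      using assms(3) that by (simp add: stationary_def)
    moreover have "q m \<ge> 0"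
      unfolding q_def using S that by (intro sum_nonneg mult_nonneg_nonneg) (auto simp: p_def)
    ultimately show ?thesis
      by (simp add: p_def)
  qed
  moreover have "(\<Sum>m\<in>L. q m - p m) = 0"
  proof -
    have "(\<Sum>m\<in>L. q m) = (\<Sum>l\<in>L. p l * (\<Sum>m\<in>L. S l m))"
      unfolding q_def sum_distrib_left by (rule sum.swap)
    also have "\<dots> = (\<Sum>l\<in>L. p l)"
      using S by simp
    finally show ?thesis
      by (simp add: sum_subtractf)
  qed
  ultimately have "\<forall>m\<in>L. q m - p m = 0"
    by (simp add: sum_nonneg_eq_0_iff[OF assms(1)])
  then show ?thesis
    by (simp add: stationary_def q_def p_def)
qed

lemma stationary_subtract_multiple:
  assumes "finite L" "\<forall>l\<in>L. a l \<ge> 0" "\<forall>l\<in>L. b l \<ge> 0" "stationary L S a" "stationary L S b"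
    and "support_on L a \<subseteq> support_on L b" "support_on L a \<noteq> {}"
  obtains t d where "\<forall>l\<in>L. d l \<ge> 0" "stationary L S d" "\<forall>l\<in>L. b l = d l + t * a l"
    "support_on L d \<subset> support_on L b"
proof -
  define f where "f l = b l / a l" for l
  \<comment> \<open>subtract the largest multiple of a that keeps b nonnegative\<close>
  have "Min (f ` support_on L a) \<in> f ` support_on L a"
    using assms(1,7) by (intro Min_in) auto
  then obtain l0 where l0: "l0 \<in> support_on L a" "f l0 = Min (f ` support_on L a)"
    by (metis imageE)
  have l0_min: "f l0 \<le> f l" if "l \<in> support_on L a" for l
    using assms(1) that unfolding l0(2) by (intro Min_le) auto
  define d where "d l = b l + (- f l0) * a l" for l
  have "d l \<ge> 0" if "l \<in> L" for l
  proof (cases "a l = 0")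
    case False
    then have "a l > 0" "f l0 \<le> b l / a l"
      using that assms(2) l0_min by (auto simp: in_support_on f_def order_le_less)
    then show ?thesis
      by (simp add: d_def le_divide_eq)
  qed (use assms(3) that in \<open>simp add: d_def\<close>)
  moreover have "stationary L S d"
    unfolding d_def by (rule stationary_lin_comb[OF assms(5,4)])
  moreover have "\<forall>l\<in>L. b l = d l + f l0 * a l"
    by (simp add: d_def)
  moreover have "support_on L d \<subset> support_on L b"
  proof -
    have "support_on L d \<subseteq> support_on L a \<union> support_on L b"
      by (auto simp: support_on_def d_def)
    moreover have "l0 \<in> support_on L b - support_on L d"
      using l0(1) assms(6) by (auto simp: in_support_on d_def f_def)
    ultimately show ?thesis
      using assms(6) by blast
  qed
  ultimately show ?thesis
    using that by blast
qed

lemma stationary_split_off_support: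
  assumes "finite L" "stochastic L S" "\<forall>l\<in>L. a l \<ge> 0" "\<forall>l\<in>L. b l \<ge> 0"
    "stationary L S a" "stationary L S b" and "\<not> support_on L a \<subseteq> support_on L b"
  obtains a1 a2 where "\<forall>l\<in>L. a1 l \<ge> 0" "stationary L S a1" "\<forall>l\<in>L. a2 l \<ge> 0" "stationary L S a2"
    "\<forall>l\<in>L. a l = a1 l + a2 l" "\<forall>l\<in>L. a1 l = 0 \<or> b l = 0" "support_on L a2 \<subset> support_on L a"
proof -
  define a1 where "a1 l = (if b l = 0 then a l else 0)" for l
  define a2 where "a2 l = (if b l = 0 then 0 else a l)" for l
  \<comment> \<open>a1 is the positive part of a - s b for s large enough to dominate a on the support of b\<close>
  define s where "s = (\<Sum>l\<in>support_on L b. a l / b l)"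
  have "max 0 (a l + (- s) * b l) = a1 l" if "l \<in> L" for l
  proof (cases "b l = 0")
    case False
    have "b l > 0"
      using False that assms(4) by (simp add: less_le)
    moreover have "a l / b l \<le> s"
      unfolding s_def using False that assms(1,3,4)
      by (intro member_le_sum) (auto simp: in_support_on)
    ultimately show ?thesis
      using False by (simp add: a1_def divide_le_eq)
  qed (use assms(3) that in \<open>simp add: a1_def\<close>)
  then have "stationary L S a1"
    using stationary_pos_part[OF assms(1,2) stationary_lin_comb[OF assms(5,6), of "- s"]]
    by (rule stationary_cong)
  moreover have "stationary L S a2"
    using stationary_lin_comb[OF assms(5) \<open>stationary L S a1\<close>, of "-1"]
    by (rule stationary_cong[rotated]) (simp add: a1_def a2_def)
  moreover have "support_on L a2 \<subset> support_on L a"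
  proof -
    obtain l where l: "l \<in> support_on L a - support_on L b"
      using assms(7) by blast
    then have "l \<notin> support_on L a2"
      by (simp add: in_support_on a2_def)
    moreover have "support_on L a2 \<subseteq> support_on L a"
      by (auto simp: support_on_def a2_def)
    ultimately show ?thesis
      using l by blast
  qed
  ultimately show ?thesis
    using assms(3) by (intro that) (auto simp: a1_def a2_def)
qed

section \<open>Measure-and-prepare channels\<close>

definition reproduces ::
    "nat set \<Rightarrow> (nat \<Rightarrow> complex^'n^'n) \<Rightarrow> (nat \<Rightarrow> complex^'n^'n) \<Rightarrow> complex^'n^'n \<Rightarrow> bool" where
  "reproduces L G \<sigma> \<rho> \<longleftrightarrow> (\<forall>(K::nat set) M. is_povm K M \<longrightarrow>
     (\<forall>k\<in>K. trace (\<rho> ** M k) = (\<Sum>l\<in>L. trace (\<rho> ** G l) * trace (\<sigma> l ** M k))))"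

lemma no_contextuality_proof_iff:
  "no_contextuality_proof T \<longleftrightarrow>
     (\<exists>L G \<sigma>. is_povm L G \<and> (\<forall>l\<in>L. is_state (\<sigma> l)) \<and> (\<forall>\<rho>\<in>T. reproduces L G \<sigma> \<rho>))"
  unfolding no_contextuality_proof_def reproduces_def ..

locale measure_prepare =
  fixes L :: "nat set" and G \<sigma> :: "nat \<Rightarrow> complex^'n^'n"
  assumes povm: "is_povm L G" and states: "\<forall>l\<in>L. is_state (\<sigma> l)"
begin

definition transition :: "nat \<Rightarrow> nat \<Rightarrow> real" where
  "transition l m = Re (trace (\<sigma> l ** G m))"

definition mixture :: "(nat \<Rightarrow> real) \<Rightarrow> complex^'n^'n" where
  "mixture a = (\<Sum>l\<in>L. smult_mat (complex_of_real (a l)) (\<sigma> l))"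

lemma finite_index: "finite L"
  and psd_effect: "l \<in> L \<Longrightarrow> psd (G l)"
  and sum_effects: "(\<Sum>l\<in>L. G l) = mat 1"
  and psd_prepared: "l \<in> L \<Longrightarrow> psd (\<sigma> l)"
  and trace_prepared: "l \<in> L \<Longrightarrow> trace (\<sigma> l) = 1"
  using povm states by (simp_all add: is_povm_def is_state_def)

lemma reproduces_imp_fixed_point:
  assumes "reproduces L G \<sigma> \<rho>"
  shows "\<rho> = (\<Sum>l\<in>L. smult_mat (trace (\<rho> ** G l)) (\<sigma> l))"
proof -
  define P where "P = (\<Sum>l\<in>L. smult_mat (trace (\<rho> ** G l)) (\<sigma> l))"
  \<comment> \<open>test with the two-outcome POVM {|v\<rangle>\<langle>v|, 1 - |v\<rangle>\<langle>v|}\<close>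
  have "cinner_vec v ((\<rho> - P) *v v) = 0" if "norm v \<le> 1" for v
  proof -
    define M where "M k = (if k = (0::nat) then outer v v else mat 1 - outer v v)" for k
    have "is_povm {0, 1} M"
      unfolding is_povm_def M_def using psd_outer psd_id_minus_outer[OF that] by simp
    then have "trace (\<rho> ** M 0) = (\<Sum>l\<in>L. trace (\<rho> ** G l) * trace (\<sigma> l ** M 0))"
      using assms unfolding reproduces_def by blast
    then have "cinner_vec v (\<rho> *v v) = (\<Sum>l\<in>L. trace (\<rho> ** G l) * cinner_vec v (\<sigma> l *v v))"
      by (simp add: M_def trace_mult_outer)
    also have "\<dots> = cinner_vec v (P *v v)"
      by (simp add: P_def sum_matrix_vector_mult smult_mat_vector_mult cinner_sum_right
          cinner_scale_right)
    finally show ?thesis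
      by (simp add: matrix_vector_mult_diff_rdistrib cinner_diff_right)
  qed
  then have "\<rho> - P = 0"
    by (rule quadratic_form_eq_0_on_unit_ball_imp_eq_0)
  then show ?thesis
    by (simp add: P_def)
qed

lemma trace_prepared_mult_effect:
  "l \<in> L \<Longrightarrow> m \<in> L \<Longrightarrow> trace (\<sigma> l ** G m) = complex_of_real (transition l m)"
  unfolding transition_def by (rule trace_psd_mult_real[OF psd_prepared psd_effect])

lemma stochastic_transition: "stochastic L transition"
proof -
  have "(\<Sum>m\<in>L. transition l m) = 1" if "l \<in> L" for l
  proof -
    have "(\<Sum>m\<in>L. trace (\<sigma> l ** G m)) = trace (\<sigma> l ** (\<Sum>m\<in>L. G m))"
      by (simp add: sum_matrix_mult_right trace_sum)
    then show ?thesis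
      using that by (simp add: transition_def sum_effects trace_prepared flip: Re_sum)
  qed
  then show ?thesis
    unfolding stochastic_def transition_def
    by (simp add: trace_psd_mult_nonneg[OF psd_prepared psd_effect])
qed

lemma psd_mixture: "\<forall>l\<in>L. a l \<ge> 0 \<Longrightarrow> psd (mixture a)"
  unfolding mixture_def by (intro psd_sum psd_smult_mat) (auto intro: psd_prepared)

lemma mixture_cong: "(\<And>l. l \<in> L \<Longrightarrow> a l = b l) \<Longrightarrow> mixture a = mixture b"
  unfolding mixture_def by (metis (no_types, lifting) sum.cong)

lemma mixture_lin_comb:
  "mixture (\<lambda>l. a l + c * b l) = mixture a + smult_mat (complex_of_real c) (mixture b)"
  unfolding mixture_def by (simp add: smult_mat_add_left sum.distrib smult_mat_sum smult_mat_smult_mat)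

lemma mixture_eq_0: "support_on L a = {} \<Longrightarrow> mixture a = 0"
  unfolding mixture_def by (simp add: support_on_def)

lemma trace_stationary_mixture_mult_effect:
  assumes "stationary L transition a" "m \<in> L"
  shows "trace (mixture a ** G m) = complex_of_real (a m)"
proof -
  have "trace (mixture a ** G m) = (\<Sum>l\<in>L. complex_of_real (a l) * trace (\<sigma> l ** G m))"
    unfolding mixture_def by (simp add: sum_matrix_mult_left smult_mat_mult_left trace_sum trace_smult_mat)
  also have "\<dots> = complex_of_real (\<Sum>l\<in>L. a l * transition l m)"
    using assms(2) by (simp add: trace_prepared_mult_effect)
  finally show ?thesis
    using assms unfolding stationary_def by simp
qed

lemma stationary_mixture_effects_eq_0:
  assumes "\<forall>l\<in>L. a l \<ge> 0" "stationary L transition a" "J \<subseteq> L" "\<forall>m\<in>J. a m = 0"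
  shows "mixture a ** (\<Sum>m\<in>J. G m) = 0" "(\<Sum>m\<in>J. G m) ** mixture a = 0"
proof -
  have psd_E: "psd (\<Sum>m\<in>J. G m)"
    using assms(3) psd_effect by (intro psd_sum) auto
  have "trace (mixture a ** (\<Sum>m\<in>J. G m)) = (\<Sum>m\<in>J. trace (mixture a ** G m))"
    by (simp add: sum_matrix_mult_right trace_sum)
  also have "\<dots> = 0"
  proof (rule sum.neutral, rule ballI)
    fix m
    assume "m \<in> J"
    then show "trace (mixture a ** G m) = 0"
      using assms(3,4) trace_stationary_mixture_mult_effect[OF assms(2), of m] by auto
  qed
  finally have trace_0: "trace (mixture a ** (\<Sum>m\<in>J. G m)) = 0" .
  then show "(\<Sum>m\<in>J. G m) ** mixture a = 0"
    by (rule trace_psd_mult_eq_0_imp[OF psd_mixture[OF assms(1)] psd_E])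
  from trace_0 have "trace ((\<Sum>m\<in>J. G m) ** mixture a) = 0"
    unfolding trace_mul_sym[of "\<Sum>m\<in>J. G m"] .
  then show "mixture a ** (\<Sum>m\<in>J. G m) = 0"
    by (rule trace_psd_mult_eq_0_imp[OF psd_E psd_mixture[OF assms(1)]])
qed

lemma stationary_mixtures_disjoint_mult_eq_0:
  assumes "\<forall>l\<in>L. a l \<ge> 0" "stationary L transition a" "\<forall>l\<in>L. b l \<ge> 0" "stationary L transition b"
    and disjoint: "\<forall>l\<in>L. a l = 0 \<or> b l = 0"
  shows "mixture a ** mixture b = 0"
proof -
  define E where "E = (\<Sum>m\<in>support_on L b. G m)"
  define E' where "E' = (\<Sum>m\<in>L - support_on L b. G m)"
  \<comment> \<open>the effects split into one that annihilates the mixture of a and one that annihilates that of b\<close>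
  have split: "E' + E = mat 1"
    using sum.subset_diff[of "support_on L b" L G] finite_index sum_effects
    unfolding E_def E'_def by (simp add: support_on_def)
  have "mixture a ** E = 0"
    unfolding E_def using assms(1,2) disjoint
    by (intro stationary_mixture_effects_eq_0) (auto simp: in_support_on support_on_def)
  have "E' ** mixture b = 0"
    unfolding E'_def using assms(3,4)
    by (intro stationary_mixture_effects_eq_0) (auto simp: in_support_on)
  have "mixture a ** mixture b = mixture a ** (E' + E) ** mixture b"
    by (simp add: split)
  also have "\<dots> = mixture a ** (E' ** mixture b) + (mixture a ** E) ** mixture b"
    by (simp add: matrix_add_ldistrib matrix_mult_add_rdistrib matrix_mul_assoc)
  also have "\<dots> = 0"
    by (simp add: \<open>mixture a ** E = 0\<close> \<open>E' ** mixture b = 0\<close>)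
  finally show ?thesis .
qed

lemma stationary_mixtures_commute:
  assumes "\<forall>l\<in>L. a l \<ge> 0" "stationary L transition a" "\<forall>l\<in>L. b l \<ge> 0" "stationary L transition b"
  shows "mixture a ** mixture b = mixture b ** mixture a"
  using assms
proof (induction "card (support_on L a) + card (support_on L b)" arbitrary: a b rule: less_induct)
  case less
  note a = less.prems(1,2) and b = less.prems(3,4)
  have finite: "finite (support_on L a)" "finite (support_on L b)"
    using finite_index by auto
  consider "support_on L a = {}" | "support_on L a \<noteq> {}" "support_on L a \<subseteq> support_on L b"
    | "\<not> support_on L a \<subseteq> support_on L b"
    by blast
  then show ?case
  proof cases
    case 1
    then show ?thesis
      by (simp add: mixture_eq_0)
  next
    case 2
    obtain t d where d: "\<forall>l\<in>L. d l \<ge> 0" "stationary L transition d"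
      and b_eq: "\<forall>l\<in>L. b l = d l + t * a l" and smaller: "support_on L d \<subset> support_on L b"
      using stationary_subtract_multiple[OF finite_index a(1) b(1) a(2) b(2) 2(2,1)] .
    have "card (support_on L d) < card (support_on L b)"
      using finite(2) smaller by (rule psubset_card_mono)
    then have IH: "mixture a ** mixture d = mixture d ** mixture a"
      using less.hyps[OF _ a d] by simp
    have "mixture b = mixture d + smult_mat (complex_of_real t) (mixture a)"
      using b_eq by (simp add: mixture_cong[of b] mixture_lin_comb)
    then show ?thesis
      by (simp add: matrix_add_ldistrib matrix_mult_add_rdistrib smult_mat_mult_left
          smult_mat_mult_right IH)
  next
    case 3
    obtain a1 a2 where a1: "\<forall>l\<in>L. a1 l \<ge> 0" "stationary L transition a1"
      and a2: "\<forall>l\<in>L. a2 l \<ge> 0" "stationary L transition a2"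
      and a_eq: "\<forall>l\<in>L. a l = a1 l + a2 l" and disjoint: "\<forall>l\<in>L. a1 l = 0 \<or> b l = 0"
      and smaller: "support_on L a2 \<subset> support_on L a"
      using stationary_split_off_support[OF finite_index stochastic_transition a(1) b(1) a(2) b(2) 3] .
    have "card (support_on L a2) < card (support_on L a)"
      using finite(1) smaller by (rule psubset_card_mono)
    then have IH: "mixture a2 ** mixture b = mixture b ** mixture a2"
      using less.hyps[OF _ a2 b] by simp
    have "mixture a1 ** mixture b = 0" "mixture b ** mixture a1 = 0"
      using disjoint by (auto intro!: stationary_mixtures_disjoint_mult_eq_0 a1 b)
    moreover have "mixture a = mixture a1 + mixture a2"
      using a_eq mixture_lin_comb[of a1 1 a2] by (simp add: mixture_cong[of a])
    ultimately show ?thesis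
      by (simp add: matrix_add_ldistrib matrix_mult_add_rdistrib IH)
  qed
qed

lemma reproduced_state_stationary_mixture:
  assumes "is_state \<rho>" "reproduces L G \<sigma> \<rho>"
  obtains p where "\<forall>l\<in>L. p l \<ge> 0" "stationary L transition p" "mixture p = \<rho>"
proof -
  define p where "p l = Re (trace (\<rho> ** G l))" for l
  have "psd \<rho>"
    using assms(1) by (simp add: is_state_def)
  then have trace_p: "trace (\<rho> ** G l) = complex_of_real (p l)" and "p l \<ge> 0" if "l \<in> L" for l
    unfolding p_def using trace_psd_mult[OF _ psd_effect[OF that]] by blast+
  have "\<rho> = (\<Sum>l\<in>L. smult_mat (trace (\<rho> ** G l)) (\<sigma> l))"
    using assms(2) by (rule reproduces_imp_fixed_point)
  also have "\<dots> = mixture p"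
    unfolding mixture_def using trace_p by (simp cong: sum.cong)
  finally have "mixture p = \<rho>" ..
  moreover have "stationary L transition p"
    unfolding stationary_def
  proof
    fix m
    assume "m \<in> L"
    have "complex_of_real (\<Sum>l\<in>L. p l * transition l m) = trace (mixture p ** G m)"
      unfolding mixture_def using \<open>m \<in> L\<close>
      by (simp add: sum_matrix_mult_left smult_mat_mult_left trace_sum trace_smult_mat
          trace_prepared_mult_effect)
    also have "\<dots> = complex_of_real (p m)"
      using \<open>mixture p = \<rho>\<close> trace_p[OF \<open>m \<in> L\<close>] by simp
    finally show "(\<Sum>l\<in>L. p l * transition l m) = p m"
      by (simp only: of_real_eq_iff)
  qed
  ultimately show ?thesis
    using \<open>\<And>l. l \<in> L \<Longrightarrow> p l \<ge> 0\<close> that by blast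
qed

lemma reproduced_states_commute:
  assumes "is_state \<rho>" "reproduces L G \<sigma> \<rho>" "is_state \<rho>'" "reproduces L G \<sigma> \<rho>'"
  shows "\<rho> ** \<rho>' = \<rho>' ** \<rho>"
proof -
  obtain p where "\<forall>l\<in>L. p l \<ge> 0" "stationary L transition p" "mixture p = \<rho>"
    using reproduced_state_stationary_mixture[OF assms(1,2)] .
  moreover obtain q where "\<forall>l\<in>L. q l \<ge> 0" "stationary L transition q" "mixture q = \<rho>'"
    using reproduced_state_stationary_mixture[OF assms(3,4)] .
  ultimately show ?thesis
    using stationary_mixtures_commute by blast
qed

end

lemma commuting_states_no_contextuality_proof:
  fixes T :: "(complex^'n^'n) set"
  assumes states: "\<forall>\<rho>\<in>T. is_state \<rho>" and comm: "\<forall>\<rho>\<in>T. \<forall>\<rho>'\<in>T. \<rho> ** \<rho>' = \<rho>' ** \<rho>"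
  shows "no_contextuality_proof T"
proof -
  obtain B where B: "finite B" "orthonormal B" "\<forall>\<rho>\<in>T. \<forall>e\<in>B. \<exists>\<mu>. \<rho> *v e = \<mu> *s e"
    "(\<Sum>e\<in>B. outer e e) = mat 1"
    using commuting_hermitian_eigenbasis[OF _ comm] states by (auto simp: is_state_def psd_hermitian)
  \<comment> \<open>measure in a common eigenbasis and re-prepare the eigenvector found\<close>
  obtain h where h: "bij_betw h {0..<card B} B"
    using ex_bij_betw_nat_finite[OF B(1)] by blast
  define L where "L = {0..<card B}"
  define G where "G l = outer (h l) (h l)" for l
  have reindex: "(\<Sum>l\<in>L. f (h l)) = (\<Sum>e\<in>B. f e)" for f :: "complex^'n \<Rightarrow> 'b::comm_monoid_add"
    unfolding L_def by (rule sum.reindex_bij_betw[OF h])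
  have "is_povm L G \<and> (\<forall>l\<in>L. is_state (G l))"
    unfolding is_povm_def
  proof (intro conjI ballI)
    show "(\<Sum>l\<in>L. G l) = mat 1"
      unfolding G_def using reindex[of "\<lambda>e. outer e e"] B(4) by (rule trans)
    fix l
    assume "l \<in> L"
    then have "norm (h l) = 1"
      using h B(2) by (auto simp: L_def bij_betw_def orthonormal_def)
    then show "psd (G l)" "is_state (G l)"
      by (simp_all add: G_def psd_outer is_state_outer)
  qed (simp add: L_def)
  moreover have "reproduces L G G \<rho>" if "\<rho> \<in> T" for \<rho>
  proof -
    have decomposition: "\<rho> = (\<Sum>e\<in>B. smult_mat (cinner_vec e (\<rho> *v e)) (outer e e))"
      using B(3) that by (intro eigenbasis_decomposition[OF B(1,2) _ B(4)]) auto
    have "trace (\<rho> ** M) = (\<Sum>l\<in>L. trace (\<rho> ** G l) * trace (G l ** M))" for M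
    proof -
      have "(\<Sum>l\<in>L. trace (\<rho> ** G l) * trace (G l ** M))
          = (\<Sum>e\<in>B. cinner_vec e (\<rho> *v e) * trace (outer e e ** M))"
        unfolding G_def trace_mult_outer by (rule reindex)
      also have "\<dots> = trace ((\<Sum>e\<in>B. smult_mat (cinner_vec e (\<rho> *v e)) (outer e e)) ** M)"
        by (simp add: sum_matrix_mult_left smult_mat_mult_left trace_sum trace_smult_mat)
      also have "\<dots> = trace (\<rho> ** M)"
        by (simp only: decomposition[symmetric])
      finally show ?thesis ..
    qed
    then show ?thesis
      unfolding reproduces_def by blast
  qed
  ultimately show ?thesis
    unfolding no_contextuality_proof_iff by blast
qed

theorem corollary2:
  fixes T :: "(complex^'n^'n) set"
  assumes "\<forall>\<rho>\<in>T. is_state \<rho>"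
  shows "no_contextuality_proof T \<longleftrightarrow> (\<forall>\<rho>\<in>T. \<forall>\<rho>'\<in>T. \<rho> ** \<rho>' = \<rho>' ** \<rho>)"
proof
  assume "no_contextuality_proof T"
  then obtain L G \<sigma> where "measure_prepare L G \<sigma>" "\<forall>\<rho>\<in>T. reproduces L G \<sigma> \<rho>"
    unfolding no_contextuality_proof_iff measure_prepare_def by blast
  then show "\<forall>\<rho>\<in>T. \<forall>\<rho>'\<in>T. \<rho> ** \<rho>' = \<rho>' ** \<rho>"
    using assms measure_prepare.reproduced_states_commute by blast
next
  assume "\<forall>\<rho>\<in>T. \<forall>\<rho>'\<in>T. \<rho> ** \<rho>' = \<rho>' ** \<rho>"
  then show "no_contextuality_proof T"
    using assms by (rule commuting_states_no_contextuality_proof[rotated])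
qed

end
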